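(* Let $\mu\ge 2$ and $\lambda\ge 1$ be integers and let $N$ be a positive integer with $\log_2 N\ge 8\mu^2+\log_2(2\mu)\cdot\lambda$. Then for every positive integer $m$ and every $\mu$-linear polynomial $f\in\mathbb{Z}[X_1,\dots,X_\mu]$ co-prime to $N$, $$\Pr_{\mathbf{x}\leftarrow\{0,\dots,m-1\}^\mu}\big[f(\mathbf{x})\equiv 0\pmod N\big]\le 2^{-\lambda}+\frac{\mu}{m},$$ where $\mathbf{x}$ is uniform on $\{0,\dots,m-1\}^\mu$.
   Context: A polynomial $f\in\mathbb{Z}[X_1,\dots,X_\mu]$ is $\mu$-linear (multilinear) if it has degree at most $1$ in each variable. $f$ is co-prime to $N$ if the greatest common divisor of $N$ and all coefficients of $f$ equals $1$. *)

theory Defs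
  imports Complex_Main "HOL-Library.FuncSet"
begin

text \<open>A mu-linear polynomial in Z[X_0,...,X_(mu-1)] is given by its coefficient function
  c on subsets S of {0..<mu}: the coefficient of the monomial prod_(i in S) X_i.\<close>

definition mlin_eval :: "nat \<Rightarrow> (nat set \<Rightarrow> int) \<Rightarrow> (nat \<Rightarrow> int) \<Rightarrow> int" where
  "mlin_eval \<mu> c x = (\<Sum>S\<in>Pow {0..<\<mu>}. c S * (\<Prod>i\<in>S. x i))"

definition mlin_coprime_to :: "nat \<Rightarrow> (nat set \<Rightarrow> int) \<Rightarrow> int \<Rightarrow> bool" where
  "mlin_coprime_to \<mu> c N \<longleftrightarrow> Gcd (insert N (c ` Pow {0..<\<mu>})) = 1"

end

theory Submission
  imports Defs "HOL-Number_Theory.Number_Theory"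
begin

text \<open>Split off the last variable, \<open>f = f\<^sub>0 + X\<^sub>\<mu> f\<^sub>1\<close>. For fixed values of the other
  variables the congruence \<open>N | f\<^sub>0 + y f\<^sub>1\<close> has at most \<open>1 + m g / N\<close> solutions \<open>y \<in> [0, m)\<close>,
  where \<open>g = gcd(N, f\<^sub>0, f\<^sub>1)\<close>. Writing \<open>g = \<Sum>\<^sub>e\<^sub>|\<^sub>g \<phi>(e)\<close> and exchanging the summations
  turns the count into a sum over the divisors \<open>e\<close> of \<open>N\<close> of the number of common roots modulo \<open>e\<close>
  of the family \<open>{f\<^sub>0, f\<^sub>1}\<close> in one variable fewer, so induction on the number of variables
  bounds the number of roots by \<open>m\<^sup>\<mu> (\<mu>/m + d\<^sub>\<mu>(N)/N)\<close>, with \<open>d\<^sub>\<mu>\<close> the \<open>\<mu>\<close>-fold divisor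
  function. Finally \<open>d\<^sub>\<mu>(N) \<le> N\<^sup>1\<^sup>-\<^sup>1\<^sup>/\<^sup>L (8\<mu>\<^sup>2)\<^sup>\<mu>\<^sup>-\<^sup>1\<close> with \<open>L = log\<^sub>2(2\<mu>)\<close>, by
  multiplicativity from the prime-power case, and the size assumption on \<open>N\<close> turns this into
  \<open>d\<^sub>\<mu>(N)/N \<le> 2\<^sup>-\<^sup>\<lambda>\<close>.\<close>

section \<open>The Piltz divisor function\<close>

text \<open>\<open>piltz k n\<close> is the Piltz divisor function \<open>d\<^sub>k(n)\<close>, the number of ordered factorisations
  \<open>n = n\<^sub>1 \<cdots> n\<^sub>k\<close>.\<close>

fun piltz :: "nat \<Rightarrow> nat \<Rightarrow> nat" where
  "piltz 0 n = (if n = 1 then 1 else 0)"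
| "piltz (Suc k) n = (\<Sum>e | e dvd n. piltz k e)"

lemma piltz_1 [simp]: "piltz k 1 = 1"
proof (induction k)
  case (Suc k)
  have "{e. e dvd (1::nat)} = {1}" by auto
  with Suc show ?case by simp
qed simp

lemma piltz_Suc_prime_power:
  assumes "prime p"
  shows "piltz (Suc k) (p ^ a) = (a + k) choose a"
proof (induction k arbitrary: a)
  case 0
  show ?case
    using assms by (simp add: prime_gt_0_nat)
next
  case (Suc k)
  have divisors: "{e. e dvd p ^ a} = (\<lambda>j. p ^ j) ` {..a}"
    using divides_primepow_nat[OF assms] by auto
  have "inj_on (\<lambda>j. p ^ j) {..a}"
    using prime_gt_1_nat[OF assms] by (intro inj_onI) simp
  then have "piltz (Suc (Suc k)) (p ^ a) = (\<Sum>j\<le>a. piltz (Suc k) (p ^ j))"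
    by (simp add: divisors sum.reindex)
  also have "\<dots> = (\<Sum>j\<le>a. (k + j) choose j)"
    using Suc.IH by (simp add: add.commute)
  also have "\<dots> = (a + Suc k) choose a"
    by (subst sum_choose_lower) (simp add: add.commute)
  finally show ?case .
qed

lemma piltz_mult_coprime_le:
  assumes "coprime a b" "a > 0" "b > 0"
  shows "piltz k (a * b) \<le> piltz k a * piltz k b"
  using assms
proof (induction k arbitrary: a b)
  case (Suc k)
  let ?D = "{x. x dvd a} \<times> {y. y dvd b}"
  have "finite ?D" using Suc.prems by auto
  have divisors: "{e. e dvd a * b} = (\<lambda>(x, y). x * y) ` ?D"
  proof (intro equalityI subsetI)
    fix e assume "e \<in> {e. e dvd a * b}"
    then obtain x y where "e = x * y" "x dvd a" "y dvd b"
      using division_decomp[of e a b] by auto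
    then show "e \<in> (\<lambda>(x, y). x * y) ` ?D" by force
  qed (auto intro: mult_dvd_mono)
  have "piltz (Suc k) (a * b) \<le> (\<Sum>(x, y)\<in>?D. piltz k (x * y))"
    unfolding piltz.simps divisors using sum_image_le[OF \<open>finite ?D\<close>, of "piltz k"]
    by (simp add: case_prod_beta comp_def)
  also have "\<dots> \<le> (\<Sum>(x, y)\<in>?D. piltz k x * piltz k y)"
  proof (intro sum_mono, clarify)
    fix x y assume "x dvd a" "y dvd b"
    moreover from this have "x > 0" "y > 0"
      using Suc.prems by (auto intro: dvd_pos_nat)
    ultimately show "piltz k (x * y) \<le> piltz k x * piltz k y"
      using Suc.IH Suc.prems(1) coprime_divisors by blast
  qed
  also have "\<dots> = piltz (Suc k) a * piltz (Suc k) b"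
    by (simp add: sum_product sum.cartesian_product case_prod_beta)
  finally show ?case .
qed simp

section \<open>A bound on the Piltz divisor function\<close>

lemma binomial_le_Suc_power: "(a + k) choose a \<le> Suc k ^ a"
proof (induction a)
  case (Suc a)
  have "Suc a * (Suc (a + k) choose Suc a) = Suc (a + k) * ((a + k) choose a)"
    by (rule Suc_times_binomial)
  also have "\<dots> \<le> Suc (a + k) * Suc k ^ a"
    using Suc.IH by (rule mult_le_mono2)
  also have "\<dots> \<le> Suc a * Suc k ^ Suc a"
    by (simp add: algebra_simps)
  finally show ?case
    by (simp del: mult_Suc)
qed simp

lemma binomial_term_le_1:
  fixes r :: real
  assumes "0 \<le> r" "r \<le> 1"
  shows "real ((a + k) choose a) * r ^ a * (1 - r) ^ k \<le> 1"
proof -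
  have "real ((a + k) choose a) * r ^ a * (1 - r) ^ (a + k - a)
      \<le> (\<Sum>i\<le>a + k. real ((a + k) choose i) * r ^ i * (1 - r) ^ (a + k - i))"
    using assms by (intro member_le_sum) auto
  also have "\<dots> = (r + (1 - r)) ^ (a + k)"
    by (rule binomial_ring[symmetric])
  finally show ?thesis by simp
qed

lemma prod_ratio_telescope:
  "3 \<le> M \<Longrightarrow> (\<Prod>n\<in>{3..<M}. real n / (real n - 2)) = real (M - 1) * real (M - 2) / 2"
proof (induction M rule: nat_induct_at_least)
  case (Suc M)
  have "(\<Prod>n\<in>{3..<Suc M}. real n / (real n - 2))
      = (\<Prod>n\<in>{3..<M}. real n / (real n - 2)) * (real M / (real M - 2))"
    using Suc.hyps by (simp add: atLeastLessThanSuc)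
  also have "\<dots> = real (M - 1) * real (M - 2) / 2 * (real M / (real M - 2))"
    unfolding Suc.IH ..
  also have "\<dots> = real (Suc M - 1) * real (Suc M - 2) / 2"
    using Suc by (simp add: field_simps)
  finally show ?case .
qed simp

lemma quadratic_le_exp: "K * (2 * K + 1) \<le> (2::nat) ^ (K + 1) + 8"
proof (cases "K \<le> 2")
  case True
  then have "K = 0 \<or> K = 1 \<or> K = 2" by auto
  then show ?thesis by auto
next
  case False
  have "4 * K + 3 \<le> 2 ^ (K + 1) \<and> K * (2 * K + 1) \<le> (2::nat) ^ (K + 1) + 8" if "3 \<le> K" for K
    using that by (induction K rule: nat_induct_at_least) (auto simp: algebra_simps)
  with False show ?thesis by simp
qed

text \<open>The bound concerns \<open>d\<^sub>k\<^sub>+\<^sub>1\<close>, so \<open>k = \<mu> - 1\<close>; \<open>piltz_log k\<close> is \<open>L = log\<^sub>2(2\<mu>)\<close> and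
  \<open>piltz_exp k\<close> is the exponent \<open>\<epsilon> = 1 - 1/L\<close>.\<close>

definition piltz_log :: "nat \<Rightarrow> real" where
  "piltz_log k = log 2 (2 * real (Suc k))"

definition piltz_exp :: "nat \<Rightarrow> real" where
  "piltz_exp k = 1 - 1 / piltz_log k"

text \<open>For \<open>p \<ge> 2(k + 1)\<close> one has \<open>d\<^sub>k\<^sub>+\<^sub>1(p\<^sup>a) \<le> p\<^sup>a\<^sup>\<epsilon>\<close>; for the smaller primes the binomial theorem
  bounds \<open>d\<^sub>k\<^sub>+\<^sub>1(p\<^sup>a) p\<^sup>-\<^sup>a\<^sup>\<epsilon>\<close> by \<open>(1 - p\<^sup>-\<^sup>\<epsilon>)\<^sup>-\<^sup>k\<close>.\<close>

definition piltz_weight :: "nat \<Rightarrow> nat \<Rightarrow> real" where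
  "piltz_weight k n =
     (if 2 * Suc k \<le> n then 1 else (1 / (1 - real n powr - piltz_exp k)) ^ k)"

lemma piltz_log_pos: "piltz_log k > 0"
  by (simp add: piltz_log_def)

lemma piltz_log_ge_2: "k \<ge> 1 \<Longrightarrow> piltz_log k \<ge> 2"
  by (simp add: piltz_log_def le_log_iff)

lemma powr_piltz_log: "2 powr piltz_log k = 2 * real (Suc k)"
  by (simp add: piltz_log_def)

lemma piltz_exp_bounds: "k \<ge> 1 \<Longrightarrow> 1/2 \<le> piltz_exp k \<and> piltz_exp k < 1"
  using piltz_log_ge_2[of k] by (auto simp: piltz_exp_def field_simps)

lemma powr_piltz_exp: "x > 0 \<Longrightarrow> x powr piltz_exp k = x / x powr (1 / piltz_log k)"
  by (simp add: piltz_exp_def powr_diff)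

lemma powr_inverse_piltz_log: "(2 * real (Suc k)) powr (1 / piltz_log k) = 2"
proof -
  have "2 * real (Suc k) = 2 powr piltz_log k"
    by (simp add: piltz_log_def)
  then have "(2 * real (Suc k)) powr (1 / piltz_log k) = 2 powr (piltz_log k * (1 / piltz_log k))"
    by (simp add: powr_powr)
  then show ?thesis
    using piltz_log_pos[of k] by simp
qed

lemma powr_inverse_piltz_log_le_2:
  assumes "1 \<le> x" "x \<le> 2 * real (Suc k)"
  shows "x powr (1 / piltz_log k) \<le> 2"
  using assms powr_mono2[of "1 / piltz_log k" x "2 * real (Suc k)"] piltz_log_pos[of k]
    powr_inverse_piltz_log[of k]
  by simp

lemma Suc_le_powr_piltz_exp:
  assumes "k \<ge> 1" "2 * real (Suc k) \<le> x"
  shows "real (Suc k) \<le> x powr piltz_exp k"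
proof -
  have "real (Suc k) = (2 * real (Suc k)) powr piltz_exp k"
    using powr_piltz_exp[of "2 * real (Suc k)" k] powr_inverse_piltz_log[of k] by simp
  also have "\<dots> \<le> x powr piltz_exp k"
    using assms piltz_exp_bounds[of k] by (intro powr_mono2) auto
  finally show ?thesis .
qed

lemma powr_neg_piltz_exp_less_1:
  "k \<ge> 1 \<Longrightarrow> 2 \<le> n \<Longrightarrow> real n powr - piltz_exp k < 1"
  using piltz_exp_bounds[of k] by (intro powr_less_one) auto

lemma piltz_weight_ge_1: "k \<ge> 1 \<Longrightarrow> 2 \<le> n \<Longrightarrow> 1 \<le> piltz_weight k n"
proof -
  assume "k \<ge> 1" "2 \<le> n"
  then have "0 < real n powr - piltz_exp k" "real n powr - piltz_exp k < 1"
    using powr_neg_piltz_exp_less_1 by auto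
  then have "1 \<le> 1 / (1 - real n powr - piltz_exp k)"
    by (simp add: field_simps)
  then show ?thesis
    by (simp add: piltz_weight_def)
qed

lemma piltz_prime_power_le:
  assumes k: "k \<ge> 1" and p: "prime p"
  shows "real (piltz (Suc k) (p ^ a)) \<le> real (p ^ a) powr piltz_exp k * piltz_weight k p"
proof -
  let ?C = "real ((a + k) choose a)" and ?P = "(real p powr piltz_exp k) ^ a"
  have p2: "real p \<ge> 2" using prime_ge_2_nat[OF p] by simp
  have "real (p ^ a) powr piltz_exp k = ?P"
    using p2 by (simp add: powr_realpow[symmetric] powr_powr mult.commute)
  moreover have "?C \<le> ?P * piltz_weight k p"
  proof (cases "2 * Suc k \<le> p")
    case True
    then have "real (Suc k) \<le> real p powr piltz_exp k"
      by (intro Suc_le_powr_piltz_exp k) linarith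
    then have "real (Suc k) ^ a \<le> ?P"
      by (intro power_mono) auto
    moreover have "?C \<le> real (Suc k) ^ a"
      using binomial_le_Suc_power[of a k] by (metis of_nat_le_iff of_nat_power)
    ultimately show ?thesis
      using True by (simp add: piltz_weight_def)
  next
    case False
    let ?r = "real p powr - piltz_exp k"
    have r: "0 < ?r" "?r < 1"
      using p2 powr_neg_piltz_exp_less_1[OF k, of p] by auto
    have "?r ^ a * ?P = 1"
      using p2 by (simp add: power_mult_distrib[symmetric] powr_add[symmetric])
    moreover have "(1 - ?r) ^ k * (1 / (1 - ?r)) ^ k = 1"
      using r by (simp add: power_mult_distrib[symmetric])
    ultimately have "?C = (?C * ?r ^ a * (1 - ?r) ^ k) * (?P * (1 / (1 - ?r)) ^ k)"
      by (simp add: algebra_simps)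
    also have "\<dots> \<le> ?P * (1 / (1 - ?r)) ^ k"
      using r binomial_term_le_1[of ?r a k] by (intro mult_left_le_one_le) auto
    finally show ?thesis
      using False by (simp add: piltz_weight_def)
  qed
  ultimately show ?thesis
    using piltz_Suc_prime_power[OF p] by simp
qed

lemma piltz_prod_prime_powers_le:
  assumes k: "k \<ge> 1" and "finite S" and "\<forall>p\<in>S. prime p"
  shows "real (piltz (Suc k) (\<Prod>p\<in>S. p ^ f p))
           \<le> real (\<Prod>p\<in>S. p ^ f p) powr piltz_exp k * (\<Prod>p\<in>S. piltz_weight k p)"
  using assms(2,3)
proof (induction S rule: finite_induct)
  case (insert p S)
  let ?A = "p ^ f p" and ?B = "\<Prod>q\<in>S. q ^ f q"
  have p: "prime p" using insert by auto
  have "coprime ?A ?B"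
  proof (rule prod_coprime_right)
    fix q assume "q \<in> S"
    with insert have "coprime p q"
      by (metis insert_iff primes_coprime)
    then show "coprime (p ^ f p) (q ^ f q)" by simp
  qed
  moreover have "?A > 0" "?B > 0"
    using insert by (auto intro!: prod_pos simp: prime_gt_0_nat)
  ultimately have "real (piltz (Suc k) (?A * ?B)) \<le> real (piltz (Suc k) ?A) * real (piltz (Suc k) ?B)"
    by (metis piltz_mult_coprime_le of_nat_le_iff of_nat_mult)
  also have "\<dots> \<le> (real ?A powr piltz_exp k * piltz_weight k p)
                   * (real ?B powr piltz_exp k * (\<Prod>q\<in>S. piltz_weight k q))"
    using insert piltz_weight_ge_1[OF k, of p] prime_ge_2_nat[OF p]
    by (intro mult_mono piltz_prime_power_le k p) (auto simp del: piltz.simps)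
  finally show ?case
    using insert by (simp add: powr_mult mult_ac)
qed (use piltz_1[of "Suc k"] in simp)

lemma inverse_one_minus_powr_le:
  assumes k: "k \<ge> 1" and n: "3 \<le> n" "n < 2 * Suc k"
  shows "1 / (1 - real n powr - piltz_exp k) \<le> real n / (real n - 2)"
proof -
  have n3: "real n \<ge> 3" using n by simp
  have "real n powr (1 / piltz_log k) \<le> 2"
    using n by (intro powr_inverse_piltz_log_le_2) auto
  then have "real n / 2 \<le> real n powr piltz_exp k"
    using n3 by (simp add: powr_piltz_exp field_simps)
  then have "real n powr - piltz_exp k \<le> 2 / real n"
    using n3 by (simp add: powr_minus field_simps)
  then have "(real n - 2) / real n \<le> 1 - real n powr - piltz_exp k"
    using n3 by (simp add: field_simps)
  moreover have "(real n - 2) / real n > 0"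
    using n3 by simp
  ultimately have "1 / (1 - real n powr - piltz_exp k) \<le> 1 / ((real n - 2) / real n)"
    by (intro divide_left_mono mult_pos_pos) auto
  then show ?thesis by simp
qed

lemma inverse_one_minus_powr_2_le: "k \<ge> 1 \<Longrightarrow> 1 / (1 - 2 powr - piltz_exp k) \<le> 4"
proof -
  assume "k \<ge> 1"
  then have "(2::real) powr - piltz_exp k \<le> 2 powr - (1/2)"
    using piltz_exp_bounds[of k] by (intro powr_mono) auto
  also have "\<dots> = inverse (sqrt 2)"
    by (simp add: powr_minus powr_half_sqrt)
  also have "\<dots> \<le> 3 / 4"
    using real_le_rsqrt[of "4/3" 2] by (simp add: power2_eq_square field_simps)
  finally show ?thesis
    using powr_gt_zero[of 2 "- piltz_exp k"] by (simp add: field_simps)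
qed

lemma prod_piltz_weight_le:
  assumes k: "k \<ge> 1"
  shows "(\<Prod>n\<in>{2..<2 * Suc k}. piltz_weight k n) \<le> (8 * real (Suc k) ^ 2) ^ k"
proof -
  define g where "g n = 1 / (1 - real n powr - piltz_exp k)" for n
  have g_nonneg: "0 \<le> g n" if "2 \<le> n" for n
    using powr_neg_piltz_exp_less_1[OF k that] by (simp add: g_def)
  have "{2..<2 * Suc k} = insert 2 {3..<2 * Suc k}"
    using k by auto
  then have "(\<Prod>n\<in>{2..<2 * Suc k}. g n) = g 2 * (\<Prod>n\<in>{3..<2 * Suc k}. g n)"
    by simp
  also have "\<dots> \<le> 4 * (\<Prod>n\<in>{3..<2 * Suc k}. real n / (real n - 2))"
    using inverse_one_minus_powr_2_le[OF k] inverse_one_minus_powr_le[OF k]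
    by (intro mult_mono prod_mono prod_nonneg g_nonneg conjI) (auto simp: g_def)
  also have "\<dots> = 4 * (real (2 * Suc k - 1) * real (2 * Suc k - 2) / 2)"
    using k by (subst prod_ratio_telescope) auto
  also have "\<dots> \<le> 8 * real (Suc k) ^ 2"
    by (simp add: power2_eq_square algebra_simps)
  finally have "(\<Prod>n\<in>{2..<2 * Suc k}. g n) ^ k \<le> (8 * real (Suc k) ^ 2) ^ k"
    by (intro power_mono prod_nonneg) (auto intro: g_nonneg)
  moreover have "(\<Prod>n\<in>{2..<2 * Suc k}. piltz_weight k n) = (\<Prod>n\<in>{2..<2 * Suc k}. g n ^ k)"
    by (intro prod.cong) (auto simp: piltz_weight_def g_def)
  ultimately show ?thesis
    by (simp only: prod_power_distrib)
qed

lemma piltz_le: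
  assumes k: "k \<ge> 1" and "D > 0"
  shows "real (piltz (Suc k) D) \<le> real D powr piltz_exp k * (8 * real (Suc k) ^ 2) ^ k"
proof -
  let ?P = "prime_factors D"
  have "real (piltz (Suc k) D) \<le> real D powr piltz_exp k * (\<Prod>p\<in>?P. piltz_weight k p)"
    using piltz_prod_prime_powers_le[OF k, of ?P "\<lambda>p. multiplicity p D"]
      prod_prime_factors[of D] \<open>D > 0\<close> by auto
  also have "(\<Prod>p\<in>?P. piltz_weight k p) = (\<Prod>p\<in>?P \<inter> {2..<2 * Suc k}. piltz_weight k p)"
    by (intro prod.mono_neutral_right)
       (auto simp: piltz_weight_def dest: prime_ge_2_nat[OF in_prime_factors_imp_prime])
  also have "\<dots> \<le> (\<Prod>n\<in>{2..<2 * Suc k}. piltz_weight k n)"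
    using piltz_weight_ge_1[OF k] by (intro prod_mono2) (auto intro: order.trans[OF zero_le_one])
  also have "\<dots> \<le> (8 * real (Suc k) ^ 2) ^ k"
    by (rule prod_piltz_weight_le[OF k])
  finally show ?thesis
    by (simp add: mult_left_mono)
qed

lemma piltz_log_quadratic_le:
  assumes k: "k \<ge> 1"
  shows "real k * (piltz_log k * (2 * piltz_log k + 1)) \<le> 8 * real (Suc k) ^ 2"
proof -
  let ?L = "piltz_log k"
  define K where "K = nat \<lceil>?L\<rceil>"
  have L2: "?L \<ge> 2" using piltz_log_ge_2[OF k] .
  have LK: "?L \<le> real K" "real K < ?L + 1"
    unfolding K_def using L2 by linarith+
  then obtain J where J: "K = J + 2"
    using L2 by (metis add.commute le_Suc_ex numeral_le_real_of_nat_iff order.trans)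
  have "2 powr (real J + 1) < 2 powr ?L"
    using LK J by (intro powr_less_mono) auto
  then have "2 * 2 ^ J < 2 * real (Suc k)"
    by (simp add: powr_piltz_log powr_add powr_realpow)
  then have "2 ^ J < Suc k"
    by (metis mult_less_cancel_left_pos of_nat_less_iff of_nat_numeral of_nat_power zero_less_numeral)
  moreover have "(2::nat) ^ (K + 1) = 8 * 2 ^ J"
    using J by (simp add: power_add)
  ultimately have "(2::nat) ^ (K + 1) + 8 \<le> 8 * Suc k"
    by simp
  then have "K * (2 * K + 1) \<le> 8 * Suc k"
    by (rule order.trans[OF quadratic_le_exp])
  then have "real (K * (2 * K + 1)) \<le> real (8 * Suc k)"
    by (simp only: of_nat_le_iff)
  then have "real K * (2 * real K + 1) \<le> 8 * real (Suc k)"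
    by (simp add: algebra_simps)
  moreover have "?L * (2 * ?L + 1) \<le> real K * (2 * real K + 1)"
    using LK L2 by (intro mult_mono) auto
  ultimately have "real k * (?L * (2 * ?L + 1)) \<le> real k * (8 * real (Suc k))"
    by (intro mult_left_mono) auto
  also have "\<dots> \<le> 8 * real (Suc k) ^ 2"
    by (simp add: power2_eq_square algebra_simps)
  finally show ?thesis .
qed

lemma piltz_div_le:
  assumes k: "k \<ge> 1" and "D > 0"
    and D_large: "log 2 (real D) \<ge> 8 * real (Suc k) ^ 2 + piltz_log k * real lam"
  shows "real (piltz (Suc k) D) / real D \<le> 2 powr - real lam"
proof -
  let ?L = "piltz_log k" and ?x = "log 2 (real D)"
  have "2 powr (2 * ?L + 1) = 2 * (2 powr ?L) ^ 2"
    by (simp add: powr_add power2_eq_square flip: powr_add[of 2 ?L ?L] mult_2)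
  also have "\<dots> = 8 * real (Suc k) ^ 2"
    unfolding powr_piltz_log by (simp add: power2_eq_square algebra_simps)
  finally have C: "2 powr (2 * ?L + 1) = 8 * real (Suc k) ^ 2" .
  have C_eq: "(8 * real (Suc k) ^ 2) ^ k = 2 powr (real k * (2 * ?L + 1))"
    unfolding C[symmetric] by (simp add: powr_realpow[symmetric] powr_powr mult.commute)
  have "real D powr piltz_exp k / real D = real D powr (- 1 / ?L)"
    using \<open>D > 0\<close> by (simp add: piltz_exp_def powr_diff powr_minus divide_inverse)
  also have "\<dots> = (2 powr ?x) powr (- 1 / ?L)"
    using \<open>D > 0\<close> by simp
  also have "\<dots> = 2 powr (- ?x / ?L)"
    by (simp add: powr_powr)
  finally have D_eq: "real D powr piltz_exp k / real D = 2 powr (- ?x / ?L)" .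
  have "real (piltz (Suc k) D) / real D \<le> real D powr piltz_exp k * (8 * real (Suc k) ^ 2) ^ k / real D"
    using piltz_le[OF k \<open>D > 0\<close>] by (simp add: divide_right_mono)
  also have "\<dots> = 2 powr (- ?x / ?L) * 2 powr (real k * (2 * ?L + 1))"
    by (simp only: C_eq D_eq times_divide_eq_left[symmetric] mult.commute)
  also have "\<dots> = 2 powr (real k * (2 * ?L + 1) - ?x / ?L)"
    by (simp flip: powr_add)
  also have "\<dots> \<le> 2 powr - real lam"
  proof (intro powr_mono)
    have "real k * (2 * ?L + 1) * ?L \<le> ?x - ?L * real lam"
      using piltz_log_quadratic_le[OF k] D_large by (simp add: algebra_simps)
    then show "real k * (2 * ?L + 1) - ?x / ?L \<le> - real lam"
      using piltz_log_ge_2[OF k] by (simp add: field_simps)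
  qed simp
  finally show ?thesis .
qed


section \<open>Counting roots of multilinear polynomials\<close>

lemma card_filter_PiE_Suc:
  assumes "finite Y"
  shows "card {x \<in> PiE {0..<Suc n} (\<lambda>_. Y). Q x}
           = (\<Sum>g\<in>PiE {0..<n} (\<lambda>_. Y). card {y \<in> Y. Q (g(n := y))})"
proof -
  let ?G = "PiE {0..<n} (\<lambda>_. Y)" and ?extend = "\<lambda>(y, g). g(n := y)"
  let ?S = "SIGMA g:?G. {y \<in> Y. Q (g(n := y))}"
  have "PiE {0..<Suc n} (\<lambda>_. Y) = ?extend ` (Y \<times> ?G)"
    by (simp add: atLeast0_lessThan_Suc PiE_insert_eq)
  then have "{x \<in> PiE {0..<Suc n} (\<lambda>_. Y). Q x} = ?extend ` prod.swap ` ?S"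
    by (auto simp: image_iff) blast
  moreover have "inj_on ?extend (prod.swap ` ?S)"
    by (rule inj_on_subset[OF inj_combinator[of n "{0..<n}" "\<lambda>_. Y"]]) auto
  ultimately have "card {x \<in> PiE {0..<Suc n} (\<lambda>_. Y). Q x} = card ?S"
    by (simp add: card_image)
  also have "\<dots> = (\<Sum>g\<in>?G. card {y \<in> Y. Q (g(n := y))})"
    using assms by (intro card_SigmaI finite_PiE) auto
  finally show ?thesis .
qed

text \<open>The coefficients of the polynomial \<open>\<partial>f/\<partial>X\<^sub>n\<close> in the variables \<open>X\<^sub>0, \<dots>, X\<^sub>n\<^sub>-\<^sub>1\<close>.\<close>

definition mlin_deriv :: "nat \<Rightarrow> (nat set \<Rightarrow> int) \<Rightarrow> nat set \<Rightarrow> int" where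
  "mlin_deriv n c = (\<lambda>T. c (insert n T))"

lemma mlin_eval_fun_upd: "mlin_eval n c (x(n := y)) = mlin_eval n c x"
  unfolding mlin_eval_def by (intro sum.cong prod.cong refl arg_cong2[where f = "(*)"]) auto

lemma mlin_eval_Suc:
  "mlin_eval (Suc n) c x = mlin_eval n c x + x n * mlin_eval n (mlin_deriv n c) x"
proof -
  have Pow_Suc: "Pow {0..<Suc n} = Pow {0..<n} \<union> insert n ` Pow {0..<n}"
    by (simp add: atLeast0_lessThan_Suc Pow_insert)
  have "inj_on (insert n) (Pow {0..<n})"
    by (rule inj_onI) (metis Pow_iff atLeastLessThan_iff insert_ident less_irrefl subsetD)
  moreover have "c (insert n T) * (\<Prod>i\<in>insert n T. x i) = x n * (c (insert n T) * (\<Prod>i\<in>T. x i))"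
    if "T \<subseteq> {0..<n}" for T
    using that finite_subset[OF that] by (subst prod.insert) auto
  ultimately have "(\<Sum>S\<in>insert n ` Pow {0..<n}. c S * (\<Prod>i\<in>S. x i))
      = (\<Sum>T\<in>Pow {0..<n}. x n * (c (insert n T) * (\<Prod>i\<in>T. x i)))"
    by (simp add: sum.reindex del: mult_cancel_left) (intro sum.cong; simp)
  moreover have "(\<Sum>S\<in>Pow {0..<Suc n}. c S * (\<Prod>i\<in>S. x i))
      = (\<Sum>S\<in>Pow {0..<n}. c S * (\<Prod>i\<in>S. x i)) + (\<Sum>S\<in>insert n ` Pow {0..<n}. c S * (\<Prod>i\<in>S. x i))"
    unfolding Pow_Suc by (rule sum.union_disjoint) auto
  ultimately show ?thesis
    by (simp add: mlin_eval_def mlin_deriv_def sum_distrib_left)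
qed

lemma card_pairwise_congruent_le:
  fixes S :: "int set" and t :: int
  assumes "t > 0" "S \<subseteq> {0..<int m}" and congruent: "\<And>y y'. y \<in> S \<Longrightarrow> y' \<in> S \<Longrightarrow> t dvd y - y'"
  shows "real (card S) \<le> 1 + real m / real_of_int t"
proof -
  have inj: "inj_on (\<lambda>y. y div t) S"
  proof (rule inj_onI)
    fix y y' assume "y \<in> S" "y' \<in> S" "y div t = y' div t"
    moreover have "y mod t = y' mod t"
      using congruent[OF \<open>y \<in> S\<close> \<open>y' \<in> S\<close>] by (simp add: mod_eq_dvd_iff)
    ultimately show "y = y'" by (metis div_mult_mod_eq)
  qed
  have image: "(\<lambda>y. y div t) ` S \<subseteq> {0..(int m - 1) div t}"
  proof clarify
    fix y assume "y \<in> S"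
    then have "0 \<le> y" "y \<le> int m - 1" using assms(2) by auto
    then show "y div t \<in> {0..(int m - 1) div t}"
      using \<open>t > 0\<close> by (auto intro: zdiv_mono1 simp: pos_imp_zdiv_nonneg_iff)
  qed
  have "card S = card ((\<lambda>y. y div t) ` S)"
    using inj by (rule card_image[symmetric])
  also have "\<dots> \<le> card {0..(int m - 1) div t}"
    by (rule card_mono[OF finite_atLeastAtMost_int image])
  also have "\<dots> = nat ((int m - 1) div t + 1)"
    by simp
  finally have "real (card S) \<le> real (nat ((int m - 1) div t + 1))"
    by (simp only: of_nat_le_iff)
  also have "\<dots> = real_of_int ((int m - 1) div t) + 1"
  proof -
    have "-1 \<le> (int m - 1) div t"
      using zdiv_mono1[of "-1" "int m - 1" t] \<open>t > 0\<close> div_eq_minus1[of t] by simp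
    then show ?thesis by simp
  qed
  also have "\<dots> \<le> 1 + real m / real_of_int t"
    using \<open>t > 0\<close> real_of_int_div4[of "int m - 1" t] divide_right_mono[of "real m - 1" "real m" t]
    by simp
  finally show ?thesis .
qed

lemma card_linear_congruences_le:
  fixes a b :: "'c \<Rightarrow> int"
  assumes "s > 0"
  shows "real (card {y \<in> {0..<int m}. \<forall>c\<in>P. int s dvd a c + y * b c})
           \<le> 1 + real m * of_int (Gcd (insert (int s) (a ` P \<union> b ` P))) / real s"
    (is "real (card ?S) \<le> 1 + real m * of_int ?G / real s")
proof (cases "?S = {}")
  case True
  then show ?thesis by (simp only: card.empty) simp
next
  case False
  then obtain y0 where y0: "y0 \<in> ?S" by blast
  define g where "g = Gcd (insert (int s) (b ` P))"
  define t where "t = int s div g"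
  have "g dvd int s" by (simp add: g_def)
  with \<open>s > 0\<close> have g_pos: "g > 0" and s_eq: "int s = t * g"
    by (auto simp: t_def g_def intro: le_neq_trans)
  with \<open>s > 0\<close> have t_pos: "t > 0"
    by (metis of_nat_0_less_iff zero_less_mult_pos2)
  have t_dvd: "t dvd y - y0" if "y \<in> ?S" for y
  proof -
    have "int s dvd (y - y0) * w" if w: "w \<in> insert (int s) (b ` P)" for w
    proof (cases "w = int s")
      case False
      then obtain c where "c \<in> P" "w = b c" using w by auto
      moreover have "(a c + y * b c) - (a c + y0 * b c) = (y - y0) * b c"
        by (simp add: algebra_simps)
      ultimately show ?thesis
        using \<open>y \<in> ?S\<close> y0 by (metis (no_types, lifting) dvd_diff mem_Collect_eq)
    qed simp
    then have "int s dvd Gcd ((*) (y - y0) ` insert (int s) (b ` P))"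
      by (simp add: dvd_Gcd_iff)
    then have "int s dvd (y - y0) * g"
      unfolding g_def Gcd_mult by simp
    then have "t * g dvd (y - y0) * g"
      by (simp only: s_eq)
    then show ?thesis
      using g_pos by simp
  qed
  have "t dvd y - y'" if "y \<in> ?S" "y' \<in> ?S" for y y'
    using dvd_diff[OF t_dvd[OF that(1)] t_dvd[OF that(2)]] by simp
  then have "real (card ?S) \<le> 1 + real m / real_of_int t"
    using t_pos by (intro card_pairwise_congruent_le) auto
  also have "real s = real_of_int t * real_of_int g"
    using s_eq by (metis of_int_mult of_int_of_nat_eq)
  then have "real m / real_of_int t = real m * real_of_int g / real s"
    using g_pos t_pos by (simp add: field_simps)
  also have "g \<le> ?G"
  proof (intro zdvd_imp_le Gcd_greatest)
    have g_dvd_b: "g dvd b c" if "c \<in> P" for c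
      unfolding g_def by (rule Gcd_dvd) (use that in auto)
    have "g dvd a c" if "c \<in> P" for c
    proof -
      have "g dvd a c + y0 * b c"
        using that y0 \<open>g dvd int s\<close> dvd_trans by auto
      then show ?thesis
        using g_dvd_b[OF that] by (simp add: dvd_add_left_iff)
    qed
    moreover fix w assume "w \<in> insert (int s) (a ` P \<union> b ` P)"
    ultimately show "g dvd w"
      using \<open>g dvd int s\<close> g_dvd_b by blast
  qed (use \<open>s > 0\<close> in simp)
  then have "real m * real_of_int g / real s \<le> real m * real_of_int ?G / real s"
    by (intro divide_right_mono mult_left_mono) auto
  finally show ?thesis by simp
qed


lemma Gcd_int_eq_sum_totient:
  fixes A :: "int set"
  shows "Gcd A = int (\<Sum>e | \<forall>a\<in>A. int e dvd a. totient e)"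
proof -
  have "Gcd A = int (nat (Gcd A))"
    by simp
  then have "{e. \<forall>a\<in>A. int e dvd a} = {e. e dvd nat (Gcd A)}"
    by (metis (no_types) dvd_Gcd_iff int_dvd_int_iff)
  then show ?thesis
    by (simp add: totient_divisor_sum)
qed

lemma sum_card_filter_swap:
  fixes f :: "'e \<Rightarrow> real"
  assumes "finite G" "finite D"
  shows "(\<Sum>g\<in>G. \<Sum>e\<in>{e \<in> D. C e g}. f e) = (\<Sum>e\<in>D. f e * real (card {g \<in> G. C e g}))"
proof -
  have "(\<Sum>g\<in>G. \<Sum>e\<in>{e \<in> D. C e g}. f e) = (\<Sum>g\<in>G. \<Sum>e\<in>D. if C e g then f e else 0)"
    using assms by (simp add: sum.inter_filter)
  also have "\<dots> = (\<Sum>e\<in>D. \<Sum>g\<in>G. if C e g then f e else 0)"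
    by (rule sum.swap)
  also have "\<dots> = (\<Sum>e\<in>D. f e * real (card {g \<in> G. C e g}))"
    using assms by (simp add: sum.inter_filter[symmetric] mult.commute)
  finally show ?thesis .
qed

definition coprime_family :: "nat \<Rightarrow> nat \<Rightarrow> (nat set \<Rightarrow> int) set \<Rightarrow> bool" where
  "coprime_family n s P \<longleftrightarrow> Gcd (insert (int s) (\<Union>c\<in>P. c ` Pow {0..<n})) = 1"

lemma coprime_family_deriv:
  assumes "coprime_family (Suc n) s P" "e dvd s"
  shows "coprime_family n e (P \<union> mlin_deriv n ` P)"
proof -
  let ?G = "Gcd (insert (int e) (\<Union>c\<in>P \<union> mlin_deriv n ` P. c ` Pow {0..<n}))"
  have "?G dvd c T" if "c \<in> P" "T \<subseteq> {0..<Suc n}" for c T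
  proof (cases "n \<in> T")
    case True
    then have "T = insert n (T - {n})" "T - {n} \<subseteq> {0..<n}"
      using that(2) by auto
    then show ?thesis
      using that(1) by (metis Gcd_dvd PowI UN_iff Un_iff image_eqI insertCI mlin_deriv_def)
  next
    case False
    then have "T \<subseteq> {0..<n}"
      using that(2) by (auto simp: less_Suc_eq)
    then show ?thesis
      using that(1) by (intro Gcd_dvd) auto
  qed
  moreover have "?G dvd int s"
    using assms(2) by (meson Gcd_dvd dvd_trans insertI1 of_nat_dvd_iff)
  ultimately have "?G dvd Gcd (insert (int s) (\<Union>c\<in>P. c ` Pow {0..<Suc n}))"
    by (auto intro!: Gcd_greatest)
  then have "is_unit ?G"
    using assms(1) unfolding coprime_family_def by (simp only:)
  then show ?thesis
    unfolding coprime_family_def by (metis normalize_Gcd is_unit_normalize)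
qed

lemma card_fibre_roots_le:
  assumes "s > 0"
  shows "real (card {y \<in> {0..<int m}. \<forall>c\<in>P. int s dvd mlin_eval (Suc n) c (g(n := y))})
           \<le> 1 + real m / real s
                 * real (\<Sum>e | e dvd s \<and> (\<forall>c\<in>P \<union> mlin_deriv n ` P. int e dvd mlin_eval n c g). totient e)"
proof -
  let ?a = "\<lambda>c. mlin_eval n c g" and ?b = "\<lambda>c. mlin_eval n (mlin_deriv n c) g"
  have "{e. \<forall>w\<in>insert (int s) (?a ` P \<union> ?b ` P). int e dvd w}
      = {e. e dvd s \<and> (\<forall>c\<in>P \<union> mlin_deriv n ` P. int e dvd mlin_eval n c g)}"
    by auto
  then have "Gcd (insert (int s) (?a ` P \<union> ?b ` P))
      = int (\<Sum>e | e dvd s \<and> (\<forall>c\<in>P \<union> mlin_deriv n ` P. int e dvd mlin_eval n c g). totient e)"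
    by (simp add: Gcd_int_eq_sum_totient)
  moreover have "real (card {y \<in> {0..<int m}. \<forall>c\<in>P. int s dvd mlin_eval (Suc n) c (g(n := y))})
      \<le> 1 + real m * of_int (Gcd (insert (int s) (?a ` P \<union> ?b ` P))) / real s"
    using card_linear_congruences_le[OF assms, of m P ?a ?b] by (simp add: mlin_eval_Suc mlin_eval_fun_upd)
  ultimately show ?thesis
    by simp
qed

lemma sum_totient_piltz_le:
  assumes "s > 0" "B \<ge> 0"
  shows "(\<Sum>e | e dvd s. real (totient e) * (A + B * real (piltz n e) / real e))
           \<le> A * real s + B * real (piltz (Suc n) s)"
proof -
  have "(\<Sum>e | e dvd s. real (totient e) * (A + B * real (piltz n e) / real e))
      = A * (\<Sum>e | e dvd s. real (totient e)) + B * (\<Sum>e | e dvd s. real (totient e) / real e * real (piltz n e))"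
    by (simp add: sum.distrib sum_distrib_left algebra_simps)
  also have "(\<Sum>e | e dvd s. real (totient e)) = real s"
    by (metis of_nat_sum totient_divisor_sum)
  also have "(\<Sum>e | e dvd s. real (totient e) / real e * real (piltz n e)) \<le> (\<Sum>e | e dvd s. real (piltz n e))"
  proof (rule sum_mono)
    fix e assume "e \<in> {e. e dvd s}"
    then have "real (totient e) / real e \<le> 1"
      using \<open>s > 0\<close> by (simp add: totient_le dvd_pos_nat)
    then show "real (totient e) / real e * real (piltz n e) \<le> real (piltz n e)"
      by (intro mult_left_le_one_le) auto
  qed
  also have "(\<Sum>e | e dvd s. real (piltz n e)) = real (piltz (Suc n) s)"
    by simp
  finally show ?thesis
    using \<open>B \<ge> 0\<close> by (simp add: mult_left_mono)
qed

abbreviation grid :: "nat \<Rightarrow> nat \<Rightarrow> (nat \<Rightarrow> int) set" where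
  "grid m n \<equiv> PiE {0..<n} (\<lambda>_. {0..<int m})"

lemma card_common_roots_le:
  assumes "m > 0" "s > 0" "coprime_family n s P"
  shows "real (card {x \<in> grid m n. \<forall>c\<in>P. int s dvd mlin_eval n c x})
           \<le> real m ^ n * (real n / real m + real (piltz n s) / real s)"
  using assms(2,3)
proof (induction n arbitrary: s P)
  case 0
  have mlin_eval_0: "mlin_eval 0 c x = c {}" for c x
    by (simp add: mlin_eval_def)
  show ?case
  proof (cases "s = 1")
    case True
    have "card {x \<in> grid m 0. \<forall>c\<in>P. int s dvd mlin_eval 0 c x} \<le> card (grid m 0)"
      by (intro card_mono) auto
    with True show ?thesis by simp
  next
    case False
    have "\<not> (\<forall>c\<in>P. int s dvd c {})"
    proof
      assume "\<forall>c\<in>P. int s dvd c {}"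
      then have "int s dvd Gcd (insert (int s) (\<Union>c\<in>P. c ` Pow {0..<0}))"
        by (auto intro!: Gcd_greatest)
      with "0.prems" False show False
        by (simp add: coprime_family_def)
    qed
    then show ?thesis
      by (simp add: mlin_eval_0)
  qed
next
  case (Suc n)
  let ?P' = "P \<union> mlin_deriv n ` P"
  let ?roots = "\<lambda>e. {g \<in> grid m n. \<forall>c\<in>?P'. int e dvd mlin_eval n c g}"
  let ?D = "{e. e dvd s}"
  have "finite ?D" "finite (grid m n)"
    using \<open>s > 0\<close> by (auto intro: finite_PiE)
  have IH: "real (card (?roots e)) \<le> real m ^ n * (real n / real m + real (piltz n e) / real e)"
    if "e \<in> ?D" for e
    using that Suc.prems by (intro Suc.IH coprime_family_deriv) (auto intro: dvd_pos_nat)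
  have swap: "(\<Sum>g\<in>grid m n. \<Sum>e\<in>{e \<in> ?D. \<forall>c\<in>?P'. int e dvd mlin_eval n c g}. real (totient e))
      = (\<Sum>e\<in>?D. real (totient e) * real (card (?roots e)))"
    using \<open>finite (grid m n)\<close> \<open>finite ?D\<close> by (rule sum_card_filter_swap)
  have "real (card {x \<in> grid m (Suc n). \<forall>c\<in>P. int s dvd mlin_eval (Suc n) c x})
      = (\<Sum>g\<in>grid m n. real (card {y \<in> {0..<int m}. \<forall>c\<in>P. int s dvd mlin_eval (Suc n) c (g(n := y))}))"
    by (simp add: card_filter_PiE_Suc)
  also have "\<dots> \<le> (\<Sum>g\<in>grid m n. 1 + real m / real s
                  * (\<Sum>e\<in>{e \<in> ?D. \<forall>c\<in>?P'. int e dvd mlin_eval n c g}. real (totient e)))"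
    using card_fibre_roots_le[OF \<open>s > 0\<close>] by (intro sum_mono) simp
  also have "\<dots> = real m ^ n + real m / real s * (\<Sum>e\<in>?D. real (totient e) * real (card (?roots e)))"
    unfolding swap[symmetric] by (simp add: sum.distrib card_PiE sum_distrib_left sum_divide_distrib)
  also have "\<dots> \<le> real m ^ n + real m / real s
                  * (\<Sum>e\<in>?D. real (totient e) * (real m ^ n * (real n / real m) + real m ^ n * real (piltz n e) / real e))"
    using IH by (intro add_left_mono mult_left_mono sum_mono) (auto simp: algebra_simps)
  also have "\<dots> \<le> real m ^ n + real m / real s
                  * (real m ^ n * (real n / real m) * real s + real m ^ n * real (piltz (Suc n) s))"
    using \<open>s > 0\<close> by (intro add_left_mono mult_left_mono sum_totient_piltz_le) auto
  also have "\<dots> = real m ^ Suc n * (real (Suc n) / real m + real (piltz (Suc n) s) / real s)"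
    using \<open>m > 0\<close> \<open>s > 0\<close> by (simp add: field_simps)
  finally show ?case .
qed

theorem mainTheorem6:
  fixes \<mu> lam m :: nat and N :: int and c :: "nat set \<Rightarrow> int"
  assumes "\<mu> \<ge> 2" and "lam \<ge> 1" and "N > 0"
    and "log 2 (real_of_int N) \<ge> 8 * real \<mu> ^ 2 + log 2 (2 * real \<mu>) * real lam"
    and "m > 0"
    and "mlin_coprime_to \<mu> c N"
  shows "real (card {x \<in> PiE {0..<\<mu>} (\<lambda>_. {0..<int m}). N dvd mlin_eval \<mu> c x})
           / real (card (PiE {0..<\<mu>} (\<lambda>_. {0..<int m})))
         \<le> 2 powr (- real lam) + real \<mu> / real m"
proof -
  obtain k where k: "\<mu> = Suc k" "k \<ge> 1"
    using assms(1) by (metis Suc_le_D Suc_le_mono one_add_one plus_1_eq_Suc)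
  obtain D where D: "N = int D" "D > 0"
    using assms(3) by (metis pos_int_cases)
  have "coprime_family \<mu> D {c}"
    using assms(6) by (simp add: coprime_family_def mlin_coprime_to_def D)
  then have count: "real (card {x \<in> grid m \<mu>. N dvd mlin_eval \<mu> c x})
      \<le> real m ^ \<mu> * (real \<mu> / real m + real (piltz \<mu> D) / real D)"
    using card_common_roots_le[OF assms(5) \<open>D > 0\<close>, of \<mu> "{c}"] by (simp add: D)
  have "real (piltz \<mu> D) / real D \<le> 2 powr - real lam"
    using assms(4) k D by (intro piltz_div_le[where k = k, folded k(1)]) (simp_all add: piltz_log_def)
  then have "real (card {x \<in> grid m \<mu>. N dvd mlin_eval \<mu> c x})
      \<le> real m ^ \<mu> * (2 powr - real lam + real \<mu> / real m)"
    by (intro order.trans[OF count] mult_left_mono) auto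
  then show ?thesis
    using \<open>m > 0\<close> by (simp add: card_PiE pos_divide_le_eq mult.commute)
qed

end
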